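(* Let $M$ be a smooth manifold of dimension $4$, let $O_M\subset\wedge^2T^\ast M$ be the open subbundle of $2$-covectors of rank $4$, and let $I\colon J^2O_M\to\mathbb{R}$ be the function defined by $$I(j^2_x\Omega)\,\Omega_x\wedge\Omega_x=(d\omega_\Omega)_x\wedge(d\omega_\Omega)_x .$$ Let $\Omega$ be a $2$-form on $M$ with values in $O_M$ and let $x\in M$ be a point at which $\omega_\Omega$ is of class $4$. Let $A_\Omega\colon TM\to TM$ be the endomorphism determined by $d\omega_\Omega(X,Y)=\Omega(A_\Omega X,Y)=\Omega(X,A_\Omega Y)$ for all $X,Y\in T_xM$. Then $$\det\bigl(\lambda\,\mathrm{id}-(A_\Omega)_x\bigr)=\bigl(\lambda^2+I(j^2_x\Omega)\bigr)^2 .$$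
   Context: For a $2$-form $\Omega$ of rank $4$ on a $4$-manifold, $\omega_\Omega$ denotes the unique $1$-form with $\omega_\Omega\wedge\Omega=d\Omega$. The class of a differential form $\omega$ at a point $x$ is the codimension in $T_xM$ of the subspace of vectors $X\in T_xM$ with $i_X\omega=0$ and $i_X(d\omega)=0$. $J^2O_M$ denotes the bundle of $2$-jets of sections of $O_M$. *)

theory Defs
  imports "HOL-Analysis.Analysis" "HOL-Library.Numeral_Type"
begin

text \<open>Local coordinate model: the 4-manifold is an open set U of real^4 (a chart);
  a k-form is given by its (antisymmetric) coefficient array in the coordinate coframe.\<close>

definition partial :: "4 \<Rightarrow> (real^4 \<Rightarrow> real) \<Rightarrow> real^4 \<Rightarrow> real" where
  "partial i f y = frechet_derivative f (at y) (axis i 1)"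

fun Ck_on :: "nat \<Rightarrow> (real^4) set \<Rightarrow> (real^4 \<Rightarrow> real) \<Rightarrow> bool" where
  "Ck_on 0 U f = continuous_on U f"
| "Ck_on (Suc k) U f = (continuous_on U f \<and> (\<forall>y\<in>U. f differentiable (at y))
      \<and> (\<forall>i. Ck_on k U (partial i f)))"

definition smooth_on :: "(real^4) set \<Rightarrow> (real^4 \<Rightarrow> real) \<Rightarrow> bool" where
  "smooth_on U f = (\<forall>k. Ck_on k U f)"

definition d2 :: "(real^4 \<Rightarrow> real^4^4) \<Rightarrow> real^4 \<Rightarrow> 4 \<Rightarrow> 4 \<Rightarrow> 4 \<Rightarrow> real" where
  "d2 \<Omega> y i j k = partial i (\<lambda>z. \<Omega> z $ j $ k) y + partial j (\<lambda>z. \<Omega> z $ k $ i) y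
                  + partial k (\<lambda>z. \<Omega> z $ i $ j) y"

definition d1 :: "(real^4 \<Rightarrow> real^4) \<Rightarrow> real^4 \<Rightarrow> real^4^4" where
  "d1 w y = (\<chi> i j. partial i (\<lambda>z. w z $ j) y - partial j (\<lambda>z. w z $ i) y)"

definition wedge12 :: "real^4 \<Rightarrow> real^4^4 \<Rightarrow> 4 \<Rightarrow> 4 \<Rightarrow> 4 \<Rightarrow> real" where
  "wedge12 w W i j k = w$i * W$j$k + w$j * W$k$i + w$k * W$i$j"

text \<open>Coefficient of e^0 \<and> e^1 \<and> e^2 \<and> e^3 in the wedge of two 2-forms.\<close>
definition wedge22 :: "real^4^4 \<Rightarrow> real^4^4 \<Rightarrow> real" where
  "wedge22 a b =
     a$0$1 * b$2$3 - a$0$2 * b$1$3 + a$0$3 * b$1$2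
   + a$1$2 * b$0$3 - a$1$3 * b$0$2 + a$2$3 * b$0$1"

definition omegaO :: "(real^4 \<Rightarrow> real^4^4) \<Rightarrow> real^4 \<Rightarrow> real^4" where
  "omegaO \<Omega> y = (THE w. \<forall>i j k. wedge12 w (\<Omega> y) i j k = d2 \<Omega> y i j k)"

definition Iinv :: "(real^4 \<Rightarrow> real^4^4) \<Rightarrow> real^4 \<Rightarrow> real" where
  "Iinv \<Omega> x = (THE c. c * wedge22 (\<Omega> x) (\<Omega> x)
                     = wedge22 (d1 (omegaO \<Omega>) x) (d1 (omegaO \<Omega>) x))"

definition bil :: "real^4^4 \<Rightarrow> real^4 \<Rightarrow> real^4 \<Rightarrow> real" where
  "bil M X Y = (\<Sum>i\<in>UNIV. \<Sum>j\<in>UNIV. X$i * M$i$j * Y$j)"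

definition form_class :: "real^4 \<Rightarrow> real^4^4 \<Rightarrow> nat" where
  "form_class w F = CARD(4) - dim {X::real^4. (\<Sum>i\<in>UNIV. X$i * w$i) = 0
                                      \<and> (\<forall>Y. bil F X Y = 0)}"

definition A_Omega :: "(real^4 \<Rightarrow> real^4^4) \<Rightarrow> real^4 \<Rightarrow> real^4^4" where
  "A_Omega \<Omega> x = (THE A. \<forall>X Y. bil (d1 (omegaO \<Omega>) x) X Y = bil (\<Omega> x) (A *v X) Y
                           \<and> bil (d1 (omegaO \<Omega>) x) X Y = bil (\<Omega> x) X (A *v Y))"

end

theory Submission
  imports Defs
begin

(* Because Omega is nondegenerate, the equation d Omega = omega \<and> Omega can be solved for omega
   by Cramer's rule, so omega is as smooth as d Omega. Applying d and using d d = 0 (symmetry of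
   second partial derivatives) gives 0 = d omega \<and> Omega - omega \<and> omega \<and> Omega, i.e.
   F \<and> Omega = 0 for F = d omega. In coordinates the defining relation of A reads Omega A = F, so
   det Omega * det (t - A) = det (t Omega - F). For skew 4x4 matrices det = Pf^2, and
   Pf (t Omega - F) = t^2 Pf Omega - t (Omega \<and> F) + Pf F = t^2 Pf Omega + Pf F, while
   I = Pf F / Pf Omega since M \<and> M = 2 Pf M. *)

lemma partial_eq:
  assumes "(f has_derivative D) (at y)"
  shows "partial i f y = D (axis i 1)"
  using frechet_derivative_at[OF assms] unfolding partial_def by simp

lemma partial_cong:
  assumes "open U" "x \<in> U" "\<And>y. y \<in> U \<Longrightarrow> f y = g y"
  shows "partial i f x = partial i g x"
proof -
  have "(f has_derivative D) (at x) \<longleftrightarrow> (g has_derivative D) (at x)" for D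
    using has_derivative_transform_within_open[OF _ assms(1,2), of f _ UNIV g]
      has_derivative_transform_within_open[OF _ assms(1,2), of g _ UNIV f] assms(3)
    by auto
  then show ?thesis unfolding partial_def frechet_derivative_def by simp
qed

lemma partial_add:
  assumes "u differentiable (at x)" "v differentiable (at x)"
  shows "partial i (\<lambda>y. u y + v y) x = partial i u x + partial i v x"
  using partial_eq[OF has_derivative_add[OF assms[unfolded frechet_derivative_works]]]
  by (simp add: partial_def)

lemma partial_mult:
  fixes u v :: "real^4 \<Rightarrow> real"
  assumes "u differentiable (at x)" "v differentiable (at x)"
  shows "partial i (\<lambda>y. u y * v y) x = partial i u x * v x + u x * partial i v x"
  using partial_eq[OF has_derivative_mult[OF assms[unfolded frechet_derivative_works]]]
  by (simp add: partial_def)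

lemma partial_minus:
  assumes "u differentiable (at x)"
  shows "partial i (\<lambda>y. - u y) x = - partial i u x"
  using partial_eq[OF has_derivative_minus[OF assms[unfolded frechet_derivative_works]]]
  by (simp add: partial_def)

lemma Ck_on_2_D:
  assumes "Ck_on 2 U f" "y \<in> U"
  shows "f differentiable (at y)" "partial i f differentiable (at y)"
    "continuous_on U (partial j (partial i f))"
  using assms by (simp_all add: numeral_2_eq_2)

section \<open>Symmetry of second partial derivatives\<close>

lemma has_real_derivative_along_line:
  fixes g :: "real^4 \<Rightarrow> real"
  assumes "g differentiable (at (p + s *\<^sub>R w))"
  shows "((\<lambda>s. g (p + s *\<^sub>R w)) has_real_derivative
           frechet_derivative g (at (p + s *\<^sub>R w)) w) (at s)"
proof -
  let ?D = "frechet_derivative g (at (p + s *\<^sub>R w))"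
  have g: "(g has_derivative ?D) (at (p + s *\<^sub>R w))"
    using assms frechet_derivative_works by blast
  have "((\<lambda>s. p + s *\<^sub>R w) has_derivative (\<lambda>h. h *\<^sub>R w)) (at s)"
    by (auto intro!: derivative_eq_intros)
  from has_derivative_compose[OF this g]
  have "((\<lambda>s. g (p + s *\<^sub>R w)) has_derivative (\<lambda>h. ?D (h *\<^sub>R w))) (at s)"
    by (simp add: o_def)
  moreover have "(\<lambda>h. ?D (h *\<^sub>R w)) = (*) (?D w)"
    using linear_scale[OF has_derivative_linear[OF g]] by (auto simp: fun_eq_iff mult.commute)
  ultimately show ?thesis by (simp add: has_field_derivative_def)
qed

lemma add_axis_mem_ball:
  fixes x :: "real^4"
  assumes "\<bar>s\<bar> + \<bar>t\<bar> < r"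
  shows "x + s *\<^sub>R axis i 1 + t *\<^sub>R axis j 1 \<in> ball x r"
proof -
  have "norm (s *\<^sub>R axis i (1::real) + t *\<^sub>R axis j 1) \<le> \<bar>s\<bar> + \<bar>t\<bar>"
    using norm_triangle_ineq[of "s *\<^sub>R axis i (1::real)" "t *\<^sub>R axis j 1"] by simp
  then show ?thesis
    using assms norm_minus_cancel[of "s *\<^sub>R axis i (1::real) + t *\<^sub>R axis j 1"]
    by (simp add: dist_norm)
qed

definition second_difference :: "4 \<Rightarrow> 4 \<Rightarrow> (real^4 \<Rightarrow> real) \<Rightarrow> real^4 \<Rightarrow> real \<Rightarrow> real" where
  "second_difference i j f x h =
     f (x + h *\<^sub>R axis i 1 + h *\<^sub>R axis j 1) - f (x + h *\<^sub>R axis i 1) - f (x + h *\<^sub>R axis j 1) + f x"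

lemma second_difference_commute: "second_difference i j f x h = second_difference j i f x h"
  unfolding second_difference_def by (simp add: algebra_simps)

lemma second_difference_mean_value:
  fixes f :: "real^4 \<Rightarrow> real"
  assumes U: "ball x r \<subseteq> U"
    and df: "\<forall>y\<in>U. f differentiable (at y)"
    and ddf: "\<forall>y\<in>U. partial i f differentiable (at y)"
    and h: "0 < h" "2 * h < r"
  obtains s t where "0 < s" "s < h" "0 < t" "t < h"
    "second_difference i j f x h = h * h * partial j (partial i f) (x + s *\<^sub>R axis i 1 + t *\<^sub>R axis j 1)"
proof -
  define u where "u = (axis i 1 :: real^4)"
  define v where "v = (axis j 1 :: real^4)"
  have inU: "x + s *\<^sub>R u + t *\<^sub>R v \<in> U" if "0 \<le> s" "s \<le> h" "0 \<le> t" "t \<le> h" for s t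
    using U add_axis_mem_ball[of s t r x i j] that h unfolding u_def v_def by auto
  define \<phi> where "\<phi> s = f ((x + h *\<^sub>R v) + s *\<^sub>R u) - f (x + s *\<^sub>R u)" for s
  have "\<exists>s. 0 < s \<and> s < h \<and> \<phi> h - \<phi> 0 = (h - 0) *
      (partial i f ((x + h *\<^sub>R v) + s *\<^sub>R u) - partial i f (x + s *\<^sub>R u))"
  proof (rule MVT2[OF h(1)])
    fix s assume s: "0 \<le> s" "s \<le> h"
    have "(x + h *\<^sub>R v) + s *\<^sub>R u \<in> U" "x + s *\<^sub>R u \<in> U"
      using inU[OF s, of h] inU[OF s, of 0] h by (simp_all add: algebra_simps)
    then show "(\<phi> has_real_derivative
        (partial i f ((x + h *\<^sub>R v) + s *\<^sub>R u) - partial i f (x + s *\<^sub>R u))) (at s)"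
      unfolding \<phi>_def partial_def u_def
      by (intro DERIV_diff has_real_derivative_along_line) (use df in auto)
  qed
  then obtain s where s: "0 < s" "s < h" and
    \<phi>_diff: "\<phi> h - \<phi> 0 = h * (partial i f ((x + s *\<^sub>R u) + h *\<^sub>R v)
                                 - partial i f ((x + s *\<^sub>R u) + 0 *\<^sub>R v))"
    by (auto simp: algebra_simps)
  define \<psi> where "\<psi> t = partial i f ((x + s *\<^sub>R u) + t *\<^sub>R v)" for t
  have "\<exists>t. 0 < t \<and> t < h \<and> \<psi> h - \<psi> 0 = (h - 0) *
      partial j (partial i f) ((x + s *\<^sub>R u) + t *\<^sub>R v)"
  proof (rule MVT2[OF h(1)])
    fix t assume "0 \<le> t" "t \<le> h"
    then have "(x + s *\<^sub>R u) + t *\<^sub>R v \<in> U" using inU[of s t] s by simp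
    then show "(\<psi> has_real_derivative partial j (partial i f) ((x + s *\<^sub>R u) + t *\<^sub>R v)) (at t)"
      unfolding \<psi>_def partial_def[of j] v_def
      by (intro has_real_derivative_along_line) (use ddf v_def in auto)
  qed
  then obtain t where t: "0 < t" "t < h" and
    \<psi>_diff: "\<psi> h - \<psi> 0 = h * partial j (partial i f) ((x + s *\<^sub>R u) + t *\<^sub>R v)" by auto
  have "second_difference i j f x h = \<phi> h - \<phi> 0"
    unfolding \<phi>_def second_difference_def u_def v_def by (simp add: algebra_simps)
  also have "\<dots> = h * h * partial j (partial i f) (x + s *\<^sub>R u + t *\<^sub>R v)"
    using \<phi>_diff \<psi>_diff unfolding \<psi>_def by simp
  finally show ?thesis using that s t unfolding u_def v_def by blast
qed

lemma second_difference_tendsto: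
  fixes f :: "real^4 \<Rightarrow> real"
  assumes "open U" "x \<in> U" "Ck_on 2 U f"
  shows "((\<lambda>h. second_difference i j f x h / h\<^sup>2) \<longlongrightarrow> partial j (partial i f) x) (at_right 0)"
proof (rule tendstoI)
  fix e :: real assume "e > 0"
  obtain r where r: "r > 0" "ball x r \<subseteq> U" using assms(1,2) open_contains_ball by blast
  obtain d where d: "d > 0"
    "\<forall>y\<in>U. dist y x < d \<longrightarrow> dist (partial j (partial i f) y) (partial j (partial i f) x) < e"
    using Ck_on_2_D(3)[OF assms(3,2)] assms(2) \<open>e > 0\<close> unfolding continuous_on_iff by blast
  have "dist (second_difference i j f x h / h\<^sup>2) (partial j (partial i f) x) < e"
    if h: "0 < h" "2 * h < min r d" for h
  proof -
    obtain s t where st: "0 < s" "s < h" "0 < t" "t < h" and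
      eq: "second_difference i j f x h = h * h * partial j (partial i f) (x + s *\<^sub>R axis i 1 + t *\<^sub>R axis j 1)"
      using second_difference_mean_value[OF r(2), of f i h j] Ck_on_2_D[OF assms(3)] h by auto
    have "x + s *\<^sub>R axis i 1 + t *\<^sub>R axis j 1 \<in> ball x (min r d)"
      using add_axis_mem_ball[of s t "min r d"] st h by simp
    with r(2) d(2) have "dist (partial j (partial i f) (x + s *\<^sub>R axis i 1 + t *\<^sub>R axis j 1))
        (partial j (partial i f) x) < e"
      by (auto simp: dist_commute subset_iff)
    then show ?thesis using eq h(1) by (simp add: power2_eq_square)
  qed
  then show "\<forall>\<^sub>F h in at_right 0.
      dist (second_difference i j f x h / h\<^sup>2) (partial j (partial i f) x) < e"
    unfolding eventually_at_right_field using r(1) d(1) by (intro exI[of _ "min r d / 2"]) auto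
qed

lemma partial_commute:
  assumes "open U" "x \<in> U" "Ck_on 2 U f"
  shows "partial i (partial j f) x = partial j (partial i f) x"
proof (rule tendsto_unique)
  show "((\<lambda>h. second_difference i j f x h / h\<^sup>2) \<longlongrightarrow> partial i (partial j f) x) (at_right 0)"
    using second_difference_tendsto[OF assms, of j i] by (simp add: second_difference_commute)
qed (use second_difference_tendsto[OF assms] in auto)

section \<open>Skew-symmetric 4x4 matrices and Pfaffians\<close>

lemma exhaust4: "(k::4) = 0 \<or> k = 1 \<or> k = 2 \<or> k = 3"
  using exhaust_4[of k] by auto

lemma UNIV_4: "(UNIV::4 set) = {0, 1, 2, 3}"
  using exhaust4 by auto

lemma all_4: "(\<forall>k::4. P k) \<longleftrightarrow> P 0 \<and> P 1 \<and> P 2 \<and> P 3"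
  using exhaust4 by metis

lemma det_4:
  "det (A::'a::comm_ring_1^4^4) =
    A$0$0 * A$1$1 * A$2$2 * A$3$3 - A$0$0 * A$1$1 * A$2$3 * A$3$2
  - A$0$0 * A$1$2 * A$2$1 * A$3$3 + A$0$0 * A$1$2 * A$2$3 * A$3$1
  + A$0$0 * A$1$3 * A$2$1 * A$3$2 - A$0$0 * A$1$3 * A$2$2 * A$3$1
  - A$0$1 * A$1$0 * A$2$2 * A$3$3 + A$0$1 * A$1$0 * A$2$3 * A$3$2
  + A$0$1 * A$1$2 * A$2$0 * A$3$3 - A$0$1 * A$1$2 * A$2$3 * A$3$0
  - A$0$1 * A$1$3 * A$2$0 * A$3$2 + A$0$1 * A$1$3 * A$2$2 * A$3$0
  + A$0$2 * A$1$0 * A$2$1 * A$3$3 - A$0$2 * A$1$0 * A$2$3 * A$3$1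
  - A$0$2 * A$1$1 * A$2$0 * A$3$3 + A$0$2 * A$1$1 * A$2$3 * A$3$0
  + A$0$2 * A$1$3 * A$2$0 * A$3$1 - A$0$2 * A$1$3 * A$2$1 * A$3$0
  - A$0$3 * A$1$0 * A$2$1 * A$3$2 + A$0$3 * A$1$0 * A$2$2 * A$3$1
  + A$0$3 * A$1$1 * A$2$0 * A$3$2 - A$0$3 * A$1$1 * A$2$2 * A$3$0
  - A$0$3 * A$1$2 * A$2$0 * A$3$1 + A$0$3 * A$1$2 * A$2$1 * A$3$0"
proof -
  have u: "(UNIV::4 set) = insert 0 {1, 2, 3}" by (simp add: UNIV_4)
  have f1: "finite {1::4, 2, 3}" "0 \<notin> {1::4, 2, 3}" by auto
  have f2: "finite {2::4, 3}" "1 \<notin> {2::4, 3}" by auto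
  have f3: "finite {3::4}" "2 \<notin> {3::4}" by auto
  show ?thesis
    unfolding det_def u sum_over_permutations_insert[OF f1] sum_over_permutations_insert[OF f2]
      sum_over_permutations_insert[OF f3] permutes_sing
    by (simp add: sign_swap_id permutation_swap_id permutation_compose sign_compose sign_id
        swap_id_eq algebra_simps)
qed

definition skew :: "real^'n^'n \<Rightarrow> bool" where
  "skew M \<longleftrightarrow> (\<forall>i j. M$i$j = - M$j$i)"

lemma skewD: "skew M \<Longrightarrow> M$i$j = - M$j$i"
  unfolding skew_def by blast

lemma skew_diag: "skew M \<Longrightarrow> M$i$i = 0"
  using skewD[of M i i] by simp

lemma skew_4_entries:
  assumes "skew M"
  shows "M$0$0 = 0" "M$1$1 = 0" "M$2$2 = 0" "M$3$3 = 0"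
    "M$1$0 = - M$0$1" "M$2$0 = - M$0$2" "M$3$0 = - M$0$3"
    "M$2$1 = - M$1$2" "M$3$1 = - M$1$3" "M$3$2 = - M$2$3"
  by (simp_all add: skew_diag[OF assms] skewD[OF assms, of 1 0] skewD[OF assms, of 2 0]
      skewD[OF assms, of 3 0] skewD[OF assms, of 2 1] skewD[OF assms, of 3 1] skewD[OF assms, of 3 2])

lemma skew_diff:
  assumes "skew W" "skew F"
  shows "skew (t *\<^sub>R W - F)"
  unfolding skew_def
proof (intro allI)
  fix i j
  show "(t *\<^sub>R W - F) $ i $ j = - (t *\<^sub>R W - F) $ j $ i"
    using skewD[OF assms(1), of i j] skewD[OF assms(2), of i j] by simp
qed

lemma transpose_skew:
  assumes "skew M"
  shows "transpose M = - M"
  unfolding transpose_def vec_eq_iff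
proof (intro allI)
  fix i j
  show "(\<chi> i j. M $ j $ i) $ i $ j = (- M) $ i $ j"
    using skewD[OF assms, of j i] by simp
qed

lemma skew_d1: "skew (d1 w x)"
  unfolding skew_def d1_def by simp

definition pfaff :: "real^4^4 \<Rightarrow> real" where
  "pfaff M = M$0$1 * M$2$3 - M$0$2 * M$1$3 + M$0$3 * M$1$2"

lemma det_skew_4: "skew M \<Longrightarrow> det M = (pfaff M)\<^sup>2"
  unfolding det_4 pfaff_def using skew_4_entries[of M]
  by (simp add: power2_eq_square algebra_simps)

lemma pfaff_neq_0_if_rank:
  assumes "skew M" "rank M = 4"
  shows "pfaff M \<noteq> 0"
  using assms det_eq_0_rank[of M] by (simp add: det_skew_4)

lemma wedge22_self: "wedge22 M M = 2 * pfaff M"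
  unfolding wedge22_def pfaff_def by (simp add: algebra_simps)

lemma pfaff_scaleR_diff: "pfaff (t *\<^sub>R W - F) = t\<^sup>2 * pfaff W - t * wedge22 W F + pfaff F"
  unfolding wedge22_def pfaff_def by (simp add: power2_eq_square algebra_simps)

lemma bil_eq_inner: "bil M X Y = inner X (M *v Y)"
  unfolding bil_def inner_vec_def matrix_vector_mult_def
  by (simp add: sum_distrib_left mult.assoc)

lemma bil_mult_left: "bil M (A *v X) Y = bil (transpose A ** M) X Y"
proof -
  have "inner (A *v X) (M *v Y) = inner (X v* transpose A) (M *v Y)" by simp
  also have "\<dots> = inner X ((transpose A ** M) *v Y)"
    by (simp only: dot_lmul_matrix matrix_vector_mul_assoc)
  finally show ?thesis by (simp add: bil_eq_inner)
qed

lemma bil_mult_right: "bil M X (A *v Y) = bil (M ** A) X Y"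
  by (simp add: bil_eq_inner matrix_vector_mul_assoc)

lemma bil_axis: "bil M (axis i 1) (axis j 1) = M$i$j"
  by (simp add: bil_eq_inner inner_axis' matrix_vector_mult_basis column_def)

lemma bil_eqI: "(\<And>X Y. bil M X Y = bil N X Y) \<Longrightarrow> M = N"
  by (metis bil_axis vec_eq_iff)

lemma matrix_mul_uminus_left: "(- A) ** B = - (A ** B :: 'a::ring_1^'n^'m)"
  by (simp add: matrix_matrix_mult_def vec_eq_iff sum_negf)

lemma matrix_mul_uminus_right: "A ** (- B) = - (A ** B :: 'a::ring_1^'n^'m)"
  by (simp add: matrix_matrix_mult_def vec_eq_iff sum_negf)

lemma matrix_mul_diff_right: "A ** (B - C) = A ** B - (A ** C :: 'a::ring_1^'n^'m)"
  by (simp add: matrix_matrix_mult_def vec_eq_iff sum_subtractf right_diff_distrib)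

lemma the_skew_adjoint:
  fixes W F :: "real^4^4"
  assumes W: "skew W" "invertible W" and F: "skew F"
  shows "W ** (THE A. \<forall>X Y. bil F X Y = bil W (A *v X) Y \<and> bil F X Y = bil W X (A *v Y)) = F"
proof -
  obtain B where B: "W ** B = mat 1" "B ** W = mat 1"
    using W(2) unfolding invertible_def by blast
  have "transpose B ** W = - (transpose B ** transpose W)"
    by (simp add: transpose_skew[OF W(1)] matrix_mul_uminus_right)
  also have "\<dots> = - mat 1" by (simp flip: matrix_transpose_mul add: B)
  finally have BW: "transpose B ** W = - mat 1" .
  have right: "W ** (B ** F) = F"
    by (simp add: matrix_mul_assoc B)
  have left: "transpose (B ** F) ** W = F"
    by (simp add: matrix_transpose_mul transpose_skew[OF F] BW matrix_mul_uminus_left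
        matrix_mul_uminus_right flip: matrix_mul_assoc)
  have "(THE A. \<forall>X Y. bil F X Y = bil W (A *v X) Y \<and> bil F X Y = bil W X (A *v Y)) = B ** F"
  proof (intro the_equality allI conjI)
    fix A
    assume "\<forall>X Y. bil F X Y = bil W (A *v X) Y \<and> bil F X Y = bil W X (A *v Y)"
    then have "W ** A = F" by (intro bil_eqI) (metis bil_mult_right)
    then show "A = B ** F" by (metis B(2) matrix_mul_assoc matrix_mul_lid)
  qed (simp_all add: bil_mult_left bil_mult_right left right)
  then show ?thesis using right by simp
qed

lemma det_sub_skew_adjoint:
  assumes W: "skew W" "pfaff W \<noteq> 0" and F: "skew F" "wedge22 W F = 0" and A: "W ** A = F"
  shows "det (t *\<^sub>R mat 1 - A) = (t\<^sup>2 + pfaff F / pfaff W)\<^sup>2"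
proof -
  have "W ** (t *\<^sub>R mat 1 - A) = t *\<^sub>R W - F"
    using A by (simp add: matrix_scalar_ac matrix_mul_diff_right)
  then have "det W * det (t *\<^sub>R mat 1 - A) = det (t *\<^sub>R W - F)"
    by (metis det_mul)
  then have "(pfaff W)\<^sup>2 * det (t *\<^sub>R mat 1 - A) = (t\<^sup>2 * pfaff W + pfaff F)\<^sup>2"
    using F(2) by (simp add: det_skew_4 W(1) skew_diff[OF W(1) F(1)] pfaff_scaleR_diff)
  then show ?thesis using W(2) by (simp add: field_simps power2_eq_square)
qed

section \<open>The 1-form omega_Omega\<close>

definition alternating :: "('i \<Rightarrow> 'i \<Rightarrow> 'i \<Rightarrow> real) \<Rightarrow> bool" where
  "alternating T \<longleftrightarrow> (\<forall>i j k. T j i k = - T i j k \<and> T i k j = - T i j k)"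

lemma alternating_perms:
  assumes "alternating T"
  shows "T b a c = - T a b c" "T a c b = - T a b c" "T b c a = T a b c" "T c a b = T a b c"
    "T c b a = - T a b c" "T a a c = 0" "T a b b = 0" "T a b a = 0"
proof -
  have swap: "T j i k = - T i j k" "T i k j = - T i j k" for i j k
    using assms unfolding alternating_def by blast+
  show "T b a c = - T a b c" "T a c b = - T a b c" by (fact swap)+
  show "T b c a = T a b c" using swap(2)[of b c a] swap(1)[of a b c] by linarith
  show "T c a b = T a b c" using swap(1)[of a c b] swap(2)[of a b c] by linarith
  show "T c b a = - T a b c"
    using swap(1)[of b c a] swap(2)[of b c a] swap(1)[of a b c] by linarith
  show "T a a c = 0" using swap(1)[of a a c] by linarith
  show "T a b b = 0" using swap(2)[of a b b] by linarith
  show "T a b a = 0" using swap(2)[of a a b] swap(1)[of a a b] by linarith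
qed

lemma alternating_eqI:
  fixes S T :: "4 \<Rightarrow> 4 \<Rightarrow> 4 \<Rightarrow> real"
  assumes "alternating S" "alternating T"
    and "S 1 2 3 = T 1 2 3" "S 0 2 3 = T 0 2 3" "S 0 1 3 = T 0 1 3" "S 0 1 2 = T 0 1 2"
  shows "S = T"
proof -
  define D where "D i j k = S i j k - T i j k" for i j k
  have D: "alternating D"
    unfolding alternating_def
  proof (intro allI conjI)
    fix i j k
    show "D j i k = - D i j k" "D i k j = - D i j k"
      unfolding D_def using alternating_perms(1,2)[OF assms(1), of i j k]
        alternating_perms(1,2)[OF assms(2), of i j k] by simp_all
  qed
  (* every index triple repeats an index or permutes one of the four increasing ones *)
  have "D i j k = 0" for i j k
    using exhaust4[of i] exhaust4[of j] exhaust4[of k] assms(3-6)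
    by (elim disjE)
      (simp_all add: alternating_perms(6-8)[OF D]
        alternating_perms(1-5)[OF D, where a=1 and b=2 and c=3]
        alternating_perms(1-5)[OF D, where a=0 and b=2 and c=3]
        alternating_perms(1-5)[OF D, where a=0 and b=1 and c=3]
        alternating_perms(1-5)[OF D, where a=0 and b=1 and c=2], simp_all add: D_def)
  then show ?thesis unfolding D_def by (simp add: fun_eq_iff)
qed

lemma alternating_wedge12:
  assumes "skew W"
  shows "alternating (wedge12 w W)"
  unfolding alternating_def
proof (intro allI conjI)
  fix i j k
  show "wedge12 w W j i k = - wedge12 w W i j k" "wedge12 w W i k j = - wedge12 w W i j k"
    using skewD[OF assms, of i k] skewD[OF assms, of k j] skewD[OF assms, of j i]
    unfolding wedge12_def by (simp_all add: algebra_simps)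
qed

lemma partial_skew:
  assumes "open U" "y \<in> U" "\<forall>z\<in>U. skew (\<Omega> z)" "(\<lambda>z. \<Omega> z $ k $ l) differentiable (at y)"
  shows "partial i (\<lambda>z. \<Omega> z $ l $ k) y = - partial i (\<lambda>z. \<Omega> z $ k $ l) y"
proof -
  have "partial i (\<lambda>z. \<Omega> z $ l $ k) y = partial i (\<lambda>z. - \<Omega> z $ k $ l) y"
    by (intro partial_cong[OF assms(1,2)]) (metis assms(3) skewD)
  also have "\<dots> = - partial i (\<lambda>z. \<Omega> z $ k $ l) y"
    by (rule partial_minus[OF assms(4)])
  finally show ?thesis .
qed

lemma alternating_d2:
  assumes "open U" "y \<in> U" "\<forall>z\<in>U. skew (\<Omega> z)"
    and "\<And>k l. (\<lambda>z. \<Omega> z $ k $ l) differentiable (at y)"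
  shows "alternating (d2 \<Omega> y)"
  unfolding alternating_def
proof (intro allI conjI)
  fix i j k
  note p = partial_skew[OF assms(1-3) assms(4)]
  show "d2 \<Omega> y j i k = - d2 \<Omega> y i j k" "d2 \<Omega> y i k j = - d2 \<Omega> y i j k"
    using p[where i=j and l=i and k=k] p[where i=i and l=k and k=j] p[where i=k and l=j and k=i]
    unfolding d2_def by linarith+
qed

(* Cramer's rule for the linear system w \<and> W = T in the four unknowns w$m. *)
definition wedge12_solution :: "real^4^4 \<Rightarrow> (4 \<Rightarrow> 4 \<Rightarrow> 4 \<Rightarrow> real) \<Rightarrow> real^4" where
  "wedge12_solution W T = (\<chi> m. (
       if m = 0 then W$0$1 * T 0 2 3 - W$0$2 * T 0 1 3 + W$0$3 * T 0 1 2
       else if m = 1 then W$0$1 * T 1 2 3 - W$1$2 * T 0 1 3 + W$1$3 * T 0 1 2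
       else if m = 2 then W$0$2 * T 1 2 3 - W$1$2 * T 0 2 3 + W$2$3 * T 0 1 2
       else W$0$3 * T 1 2 3 - W$1$3 * T 0 2 3 + W$2$3 * T 0 1 3) / pfaff W)"

lemma wedge12_solution_nth:
  "wedge12_solution W T $ 0 = (W$0$1 * T 0 2 3 - W$0$2 * T 0 1 3 + W$0$3 * T 0 1 2) / pfaff W"
  "wedge12_solution W T $ 1 = (W$0$1 * T 1 2 3 - W$1$2 * T 0 1 3 + W$1$3 * T 0 1 2) / pfaff W"
  "wedge12_solution W T $ 2 = (W$0$2 * T 1 2 3 - W$1$2 * T 0 2 3 + W$2$3 * T 0 1 2) / pfaff W"
  "wedge12_solution W T $ 3 = (W$0$3 * T 1 2 3 - W$1$3 * T 0 2 3 + W$2$3 * T 0 1 3) / pfaff W"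
  unfolding wedge12_solution_def by simp_all

lemma wedge12_solution:
  assumes "skew W" "pfaff W \<noteq> 0" "alternating T"
  shows "wedge12 (wedge12_solution W T) W = T"
proof (rule alternating_eqI[OF alternating_wedge12[OF assms(1)] assms(3)])
  note W = skew_4_entries[OF assms(1)]
  show "wedge12 (wedge12_solution W T) W 1 2 3 = T 1 2 3"
    "wedge12 (wedge12_solution W T) W 0 2 3 = T 0 2 3"
    "wedge12 (wedge12_solution W T) W 0 1 3 = T 0 1 3"
    "wedge12 (wedge12_solution W T) W 0 1 2 = T 0 1 2"
    by (simp_all add: wedge12_def wedge12_solution_nth W field_simps assms(2))
      (simp_all add: pfaff_def algebra_simps)
qed

lemma wedge12_solution_unique:
  assumes "skew W" "pfaff W \<noteq> 0" "wedge12 w W = T"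
  shows "w = wedge12_solution W T"
proof -
  note W = skew_4_entries[OF assms(1)]
  show ?thesis
    unfolding vec_eq_iff all_4 wedge12_solution_nth assms(3)[symmetric]
    by (simp add: wedge12_def W field_simps assms(2)) (simp add: pfaff_def algebra_simps)
qed

lemma omegaO_eq:
  assumes "skew (\<Omega> y)" "pfaff (\<Omega> y) \<noteq> 0" "alternating (d2 \<Omega> y)"
  shows "omegaO \<Omega> y = wedge12_solution (\<Omega> y) (d2 \<Omega> y)"
  unfolding omegaO_def
proof (rule the_equality)
  show "\<forall>i j k. wedge12 (wedge12_solution (\<Omega> y) (d2 \<Omega> y)) (\<Omega> y) i j k = d2 \<Omega> y i j k"
    by (simp add: wedge12_solution[OF assms])
qed (use wedge12_solution_unique[OF assms(1,2)] in \<open>auto simp: fun_eq_iff\<close>)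

lemma differentiable_wedge12_solution:
  assumes "\<And>i j. (\<lambda>y. W y $ i $ j) differentiable (at x)"
    and "\<And>i j k. (\<lambda>y. T y i j k) differentiable (at x)" and "pfaff (W x) \<noteq> 0"
  shows "(\<lambda>y. wedge12_solution (W y) (T y) $ m) differentiable (at x)"
proof -
  have "(\<lambda>y. pfaff (W y)) differentiable (at x)"
    unfolding pfaff_def by (intro differentiable_add differentiable_diff differentiable_mult assms(1))
  then show ?thesis
    using exhaust4[of m]
    by (elim disjE; simp only: wedge12_solution_nth;
        intro differentiable_divide differentiable_add differentiable_diff differentiable_mult assms)
qed

section \<open>d d = 0 and the vanishing of d omega_Omega \<and> Omega\<close>

(* The e0 \<and> e1 \<and> e2 \<and> e3 coefficients of dT and of w \<and> T for a 3-form T. *)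
definition d3 :: "(real^4 \<Rightarrow> 4 \<Rightarrow> 4 \<Rightarrow> 4 \<Rightarrow> real) \<Rightarrow> real^4 \<Rightarrow> real" where
  "d3 T x = partial 0 (\<lambda>y. T y 1 2 3) x - partial 1 (\<lambda>y. T y 0 2 3) x
          + partial 2 (\<lambda>y. T y 0 1 3) x - partial 3 (\<lambda>y. T y 0 1 2) x"

definition wedge13 :: "real^4 \<Rightarrow> (4 \<Rightarrow> 4 \<Rightarrow> 4 \<Rightarrow> real) \<Rightarrow> real" where
  "wedge13 w T = w$0 * T 1 2 3 - w$1 * T 0 2 3 + w$2 * T 0 1 3 - w$3 * T 0 1 2"

lemma d3_cong:
  assumes "open U" "x \<in> U" "\<And>y. y \<in> U \<Longrightarrow> T y = T' y"
  shows "d3 T x = d3 T' x"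
proof -
  have "partial a (\<lambda>y. T y b c e) x = partial a (\<lambda>y. T' y b c e) x" for a b c e
    by (rule partial_cong[OF assms(1,2)]) (simp add: assms(3))
  then show ?thesis by (simp add: d3_def)
qed

lemma wedge13_wedge12_self: "skew W \<Longrightarrow> wedge13 w (wedge12 w W) = 0"
  unfolding wedge13_def wedge12_def by (simp add: skew_4_entries algebra_simps)

lemma d3_d2_eq_0:
  assumes U: "open U" "x \<in> U"
    and \<Omega>: "\<And>k l. Ck_on 2 U (\<lambda>y. \<Omega> y $ k $ l)" "\<forall>y\<in>U. skew (\<Omega> y)"
  shows "d3 (d2 \<Omega>) x = 0"
proof -
  have d2_partial: "partial a (\<lambda>y. d2 \<Omega> y b c e) x = partial a (partial b (\<lambda>y. \<Omega> y $ c $ e)) x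
      + partial a (partial c (\<lambda>y. \<Omega> y $ e $ b)) x + partial a (partial e (\<lambda>y. \<Omega> y $ b $ c)) x"
    for a b c e
    unfolding d2_def using Ck_on_2_D(2)[OF \<Omega>(1) U(2)]
    by (simp add: partial_add differentiable_add)
  have commute: "partial a (partial b (\<lambda>y. \<Omega> y $ k $ l)) x
      = partial b (partial a (\<lambda>y. \<Omega> y $ k $ l)) x"
    for a b k l
    using partial_commute[OF U \<Omega>(1)] .
  have partial2_skew: "partial a (partial b (\<lambda>y. \<Omega> y $ l $ k)) x
      = - partial a (partial b (\<lambda>y. \<Omega> y $ k $ l)) x"
    for a b k l
  proof -
    have "partial a (partial b (\<lambda>y. \<Omega> y $ l $ k)) x
        = partial a (\<lambda>y. - partial b (\<lambda>y. \<Omega> y $ k $ l) y) x"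
      using partial_skew[OF U(1) _ \<Omega>(2) Ck_on_2_D(1)[OF \<Omega>(1)]]
      by (intro partial_cong[OF U]) blast
    also have "\<dots> = - partial a (partial b (\<lambda>y. \<Omega> y $ k $ l)) x"
      by (rule partial_minus[OF Ck_on_2_D(2)[OF \<Omega>(1) U(2)]])
    finally show ?thesis .
  qed
  (* the twelve second partials cancel in pairs *)
  show ?thesis
    unfolding d3_def d2_partial
    using commute[of 0 1 2 3] commute[of 0 2 1 3] commute[of 0 3 1 2] commute[of 1 2 3 0]
      commute[of 1 3 0 2] commute[of 2 3 0 1] partial2_skew[of 0 2 1 3] partial2_skew[of 3 1 0 2]
    by linarith
qed

lemma partial_wedge12:
  assumes "\<And>m. (\<lambda>y. w y $ m) differentiable (at x)" "\<And>k l. (\<lambda>y. W y $ k $ l) differentiable (at x)"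
  shows "partial a (\<lambda>y. wedge12 (w y) (W y) b c e) x
    = wedge12 (\<chi> m. partial a (\<lambda>y. w y $ m) x) (W x) b c e
      + wedge12 (w x) (\<chi> k l. partial a (\<lambda>y. W y $ k $ l) x) b c e"
  unfolding wedge12_def using assms
  by (simp add: partial_add partial_mult differentiable_add differentiable_mult algebra_simps)

lemma d3_wedge12:
  assumes U: "open U" "x \<in> U"
    and W: "\<forall>y\<in>U. skew (W y)" "\<And>k l. (\<lambda>y. W y $ k $ l) differentiable (at x)"
    and w: "\<And>m. (\<lambda>y. w y $ m) differentiable (at x)"
  shows "d3 (\<lambda>y. wedge12 (w y) (W y)) x = wedge22 (W x) (d1 w x) - wedge13 (w x) (d2 W x)"
proof -
  note p = partial_skew[OF U W(1) W(2)]
  show ?thesis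
    unfolding d3_def partial_wedge12[OF w W(2)]
    unfolding wedge12_def wedge22_def wedge13_def d1_def d2_def
    by (simp add: skew_4_entries W(1)[rule_format, OF U(2)] algebra_simps
        p[where l=1 and k=0] p[where l=2 and k=0] p[where l=3 and k=0]
        p[where l=2 and k=1] p[where l=3 and k=1] p[where l=3 and k=2])
qed

lemma wedge22_d1_omegaO_eq_0:
  assumes U: "open U" "x \<in> U"
    and \<Omega>: "\<And>k l. Ck_on 2 U (\<lambda>y. \<Omega> y $ k $ l)" "\<forall>y\<in>U. skew (\<Omega> y)"
      "\<forall>y\<in>U. pfaff (\<Omega> y) \<noteq> 0"
  shows "wedge22 (\<Omega> x) (d1 (omegaO \<Omega>) x) = 0"
proof -
  have \<Omega>_diff: "(\<lambda>z. \<Omega> z $ k $ l) differentiable (at y)" if "y \<in> U" for y k l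
    using Ck_on_2_D(1)[OF \<Omega>(1) that] .
  have \<omega>: "omegaO \<Omega> y = wedge12_solution (\<Omega> y) (d2 \<Omega> y)"
    and d2: "d2 \<Omega> y = wedge12 (omegaO \<Omega> y) (\<Omega> y)" if "y \<in> U" for y
  proof -
    have "alternating (d2 \<Omega> y)"
      using alternating_d2[OF U(1) that \<Omega>(2) \<Omega>_diff[OF that]] .
    then show "omegaO \<Omega> y = wedge12_solution (\<Omega> y) (d2 \<Omega> y)"
      "d2 \<Omega> y = wedge12 (omegaO \<Omega> y) (\<Omega> y)"
      using \<Omega>(2,3) that by (simp_all add: omegaO_eq wedge12_solution)
  qed
  have \<omega>_diff: "(\<lambda>y. omegaO \<Omega> y $ m) differentiable (at x)" for m
  proof -
    have "(\<lambda>y. d2 \<Omega> y i j k) differentiable (at x)" for i j k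
      unfolding d2_def using Ck_on_2_D(2)[OF \<Omega>(1) U(2)] by (intro differentiable_add)
    then obtain D where "((\<lambda>y. wedge12_solution (\<Omega> y) (d2 \<Omega> y) $ m) has_derivative D) (at x)"
      using differentiable_wedge12_solution[OF \<Omega>_diff[OF U(2)]] \<Omega>(3) U(2)
      unfolding differentiable_def by blast
    then have "((\<lambda>y. omegaO \<Omega> y $ m) has_derivative D) (at x)"
      by (rule has_derivative_transform_within_open[OF _ U]) (simp add: \<omega>)
    then show ?thesis unfolding differentiable_def by blast
  qed
  have "0 = d3 (d2 \<Omega>) x"
    using d3_d2_eq_0[OF U \<Omega>(1,2)] by simp
  also have "\<dots> = d3 (\<lambda>y. wedge12 (omegaO \<Omega> y) (\<Omega> y)) x"
    by (rule d3_cong[OF U]) (rule d2)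
  also have "\<dots> = wedge22 (\<Omega> x) (d1 (omegaO \<Omega>) x) - wedge13 (omegaO \<Omega> x) (d2 \<Omega> x)"
    using d3_wedge12[OF U \<Omega>(2) \<Omega>_diff[OF U(2)] \<omega>_diff] .
  also have "\<dots> = wedge22 (\<Omega> x) (d1 (omegaO \<Omega>) x)"
    using \<Omega>(2) U(2) by (simp add: d2 wedge13_wedge12_self)
  finally show ?thesis by simp
qed

lemma Iinv_eq:
  assumes "pfaff (\<Omega> x) \<noteq> 0"
  shows "Iinv \<Omega> x = pfaff (d1 (omegaO \<Omega>) x) / pfaff (\<Omega> x)"
  unfolding Iinv_def by (rule the_equality) (use assms in \<open>simp_all add: wedge22_self field_simps\<close>)

theorem proposition4p1:
  fixes U :: "(real^4) set" and \<Omega> :: "real^4 \<Rightarrow> real^4^4" and x :: "real^4"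
  assumes "open U" and "x \<in> U"
    and "\<forall>i j. smooth_on U (\<lambda>y. \<Omega> y $ i $ j)"
    and "\<forall>y\<in>U. \<forall>i j. \<Omega> y $ i $ j = - \<Omega> y $ j $ i"
    and "\<forall>y\<in>U. rank (\<Omega> y) = 4"
    and "form_class (omegaO \<Omega> x) (d1 (omegaO \<Omega>) x) = 4"
  shows "\<forall>t::real. det (t *\<^sub>R mat 1 - A_Omega \<Omega> x) = (t\<^sup>2 + Iinv \<Omega> x)\<^sup>2"
proof
  fix t :: real
  define F where "F = d1 (omegaO \<Omega>) x"
  have skew: "\<forall>y\<in>U. skew (\<Omega> y)" using assms(4) unfolding skew_def by blast
  have pfaff: "\<forall>y\<in>U. pfaff (\<Omega> y) \<noteq> 0" using skew assms(5) by (simp add: pfaff_neq_0_if_rank)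
  have C2: "Ck_on 2 U (\<lambda>y. \<Omega> y $ k $ l)" for k l
    using assms(3) unfolding smooth_on_def by blast
  have "wedge22 (\<Omega> x) F = 0"
    unfolding F_def using wedge22_d1_omegaO_eq_0[OF assms(1,2) C2 skew pfaff] .
  moreover have "\<Omega> x ** A_Omega \<Omega> x = F"
    unfolding A_Omega_def F_def
    using skew pfaff assms(2)
    by (intro the_skew_adjoint) (simp_all add: skew_d1 invertible_det_nz det_skew_4)
  ultimately show "det (t *\<^sub>R mat 1 - A_Omega \<Omega> x) = (t\<^sup>2 + Iinv \<Omega> x)\<^sup>2"
    using skew pfaff assms(2) by (simp add: det_sub_skew_adjoint skew_d1 Iinv_eq F_def)
qed

end
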